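(* Let $\sigma(x)=\mathrm{e}^{-x^2/2}$ and let $p_m(x)=\pi^{-1/4}2^{-m/2}(m!)^{-1/2}H_m(x)$ be the orthonormal Hermite polynomials on $\mathbf{R}$ (so $\int_{\mathbf{R}}p_mp_k\mathrm{e}^{-x^2}\,\mathrm{d}x=\delta_{m,k}$), where $H_m$ are the Hermite polynomials. Let $z=\mathrm{e}^{i\theta}$ with $|\theta|<\pi/4$, put $p_{m,z}(x)=z^{1/2}p_m(zx)$ and $N_{m,z}=\int_{-\infty}^\infty|p_{m,z}(x)\sigma(zx)|^2\,\mathrm{d}x$ with $\sigma(zx)=\mathrm{e}^{-z^2x^2/2}$, and let $s_\theta=(\cos 2\theta)^{1/2}$. Then for all non-negative integers $n$, \[ N_{2n,z}\le\pi(n+1)^{1/2}\,2^{4n+2}\,s_\theta^{-4n-1}. \]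
   Context: $H_m(x)=(2x)^m-\frac{m!}{1!(m-2)!}(2x)^{m-2}+\frac{m!}{2!(m-4)!}(2x)^{m-4}-\cdots$ are the (physicists') Hermite polynomials; $z^{1/2}$ is the principal square root. *)

theory Defs
  imports "HOL-Analysis.Analysis"
begin

definition hermite :: "nat \<Rightarrow> complex \<Rightarrow> complex" where
  "hermite m x = (\<Sum>k\<le>m div 2. (-1) ^ k * of_nat (fact m div (fact k * fact (m - 2 * k)))
                                   * (2 * x) ^ (m - 2 * k))"

definition hermite_on :: "nat \<Rightarrow> complex \<Rightarrow> complex" where
  "hermite_on m x = complex_of_real (pi powr (-1/4) * 2 powr (- real m / 2) / sqrt (fact m))
                    * hermite m x"

definition hermite_rot :: "nat \<Rightarrow> complex \<Rightarrow> real \<Rightarrow> complex" where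
  "hermite_rot m z x = csqrt z * hermite_on m (z * complex_of_real x)"

definition N_integrand :: "nat \<Rightarrow> complex \<Rightarrow> real \<Rightarrow> real" where
  "N_integrand m z x = (cmod (hermite_rot m z x * exp (- (z * complex_of_real x)\<^sup>2 / 2)))\<^sup>2"

definition N_mz :: "nat \<Rightarrow> complex \<Rightarrow> real" where
  "N_mz m z = (\<integral>x. N_integrand m z x \<partial>lborel)"

end

(*
  On the ray x \<mapsto> z x the Gaussian factor has modulus |exp (-(z x)^2/2)|^2 = exp (-c x^2) with
  c = cos 2\<theta> > 0, so it suffices to dominate |p_2n(z x)|^2 exp (-c x^2) by a Gaussian.
  In H_2n(w) the term with (2w)^(2j) is estimated by (4|w|^2)^j \<le> j! \<mu>^j exp (4|w|^2/\<mu>); the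
  central binomial bound 4^j \<le> sqrt (4j+1) (2j choose j) gives j!/(2j)! \<le> sqrt (4j+1)/(j! 4^j),
  and the coefficient sum collapses to a binomial sum:
    |H_2n(w)| \<le> (2n)!/n! sqrt (4n+1) (1 + \<mu>/4)^n exp (4|w|^2/\<mu>).
  Taking \<mu> = 10/c leaves the integrable Gaussian exp (-c x^2/5), and the opposite bound
  sqrt (3n+1) (2n choose n) \<le> 4^n absorbs the remaining polynomial factor.
*)
theory Submission
  imports Defs "HOL-Probability.Distributions"
begin

lemma central_binomial_Suc:
  "real ((2 * Suc n) choose Suc n) = 2 * (2 * real n + 1) / (real n + 1) * real ((2 * n) choose n)"
proof -
  have "real ((2 * Suc n) choose Suc n) = fact (2 * Suc n) / (fact (Suc n))\<^sup>2"
    by (subst binomial_fact) (auto simp: power2_eq_square)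
  also have "\<dots> = (2 * real n + 2) * (2 * real n + 1) * fact (2 * n) / ((real n + 1) * fact n)\<^sup>2"
    by (simp add: algebra_simps)
  also have "\<dots> = 2 * (2 * real n + 1) / (real n + 1) * (fact (2 * n) / (fact n)\<^sup>2)"
    by (simp add: divide_simps power2_eq_square) (simp add: algebra_simps)
  also have "fact (2 * n) / (fact n)\<^sup>2 = real ((2 * n) choose n)"
    by (subst binomial_fact) (auto simp: power2_eq_square mult_2)
  finally show ?thesis .
qed

lemma central_binomial_lower_bound_sqrt:
  "4 ^ n \<le> sqrt (4 * real n + 1) * real ((2 * n) choose n)"
proof -
  have "16 ^ n \<le> (4 * real n + 1) * real ((2 * n) choose n) ^ 2"
  proof (induction n)
    case (Suc n)
    define r where "r = 2 * (2 * real n + 1) / (real n + 1)"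
    have "16 * (4 * real n + 1) \<le> (4 * real (Suc n) + 1) * r ^ 2"
      unfolding r_def by (simp add: power_divide le_divide_eq power2_eq_square) (simp add: algebra_simps)
    then have "16 * ((4 * real n + 1) * real ((2 * n) choose n) ^ 2)
               \<le> (4 * real (Suc n) + 1) * (r * real ((2 * n) choose n)) ^ 2"
      unfolding power_mult_distrib mult.assoc[symmetric] by (rule mult_right_mono) simp
    moreover have "16 ^ Suc n \<le> 16 * ((4 * real n + 1) * real ((2 * n) choose n) ^ 2)"
      unfolding power_Suc using Suc.IH by (rule mult_left_mono) simp
    ultimately show ?case
      unfolding central_binomial_Suc r_def[symmetric] by (rule order_trans[rotated])
  qed simp
  then have "sqrt ((4 ^ n)\<^sup>2) \<le> sqrt ((4 * real n + 1) * real ((2 * n) choose n) ^ 2)"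
    by (simp add: power_even_eq[symmetric] power_mult)
  then show ?thesis by (simp add: real_sqrt_mult)
qed

lemma central_binomial_upper_bound_sqrt:
  "sqrt (3 * real n + 1) * real ((2 * n) choose n) \<le> 4 ^ n"
proof -
  have "(3 * real n + 1) * real ((2 * n) choose n) ^ 2 \<le> 16 ^ n"
  proof (induction n)
    case (Suc n)
    define r where "r = 2 * (2 * real n + 1) / (real n + 1)"
    have "(3 * real (Suc n) + 1) * r ^ 2 \<le> 16 * (3 * real n + 1)"
      unfolding r_def by (simp add: power_divide divide_le_eq power2_eq_square) (simp add: algebra_simps)
    then have "(3 * real (Suc n) + 1) * (r * real ((2 * n) choose n)) ^ 2
               \<le> 16 * ((3 * real n + 1) * real ((2 * n) choose n) ^ 2)"
      unfolding power_mult_distrib mult.assoc[symmetric] by (rule mult_right_mono) simp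
    moreover have "16 * ((3 * real n + 1) * real ((2 * n) choose n) ^ 2) \<le> 16 ^ Suc n"
      unfolding power_Suc using Suc.IH by (rule mult_left_mono) simp
    ultimately show ?case
      unfolding central_binomial_Suc r_def[symmetric] by (rule order_trans)
  qed simp
  then have "sqrt ((3 * real n + 1) * real ((2 * n) choose n) ^ 2) \<le> sqrt ((4 ^ n)\<^sup>2)"
    by (simp add: power_even_eq[symmetric] power_mult)
  then show ?thesis by (simp add: real_sqrt_mult)
qed

lemma central_binomial_mult_le:
  "real ((2 * n) choose n) * (4 * real n + 1) \<le> 4 * sqrt (real n + 1) * 4 ^ n"
proof -
  have "(4 * real n + 1)\<^sup>2 \<le> (4 * sqrt (real n + 1) * sqrt (3 * real n + 1))\<^sup>2"
    by (simp add: power_mult_distrib power2_eq_square algebra_simps)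
  then have "4 * real n + 1 \<le> 4 * sqrt (real n + 1) * sqrt (3 * real n + 1)"
    by (rule power2_le_imp_le) simp
  then have "real ((2 * n) choose n) * (4 * real n + 1)
             \<le> 4 * sqrt (real n + 1) * (sqrt (3 * real n + 1) * real ((2 * n) choose n))"
    by (simp add: mult_left_mono mult_ac)
  also have "\<dots> \<le> 4 * sqrt (real n + 1) * 4 ^ n"
    by (intro mult_left_mono central_binomial_upper_bound_sqrt) simp
  finally show ?thesis .
qed

lemma power_le_fact_mult_exp:
  fixes y \<mu> :: real
  assumes "0 \<le> y" "0 < \<mu>"
  shows "y ^ j \<le> fact j * \<mu> ^ j * exp (y / \<mu>)"
proof -
  have "(\<lambda>i. (y / \<mu>) ^ i /\<^sub>R fact i) sums exp (y / \<mu>)"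
    by (rule exp_converges)
  then have "(y / \<mu>) ^ j /\<^sub>R fact j \<le> exp (y / \<mu>)"
    using sum_le_suminf[of _ "{j}"] assms by (fastforce simp: sums_iff)
  then show ?thesis
    using assms by (simp add: field_simps)
qed

lemma norm_hermite_le:
  "cmod (hermite m w) \<le> (\<Sum>k\<le>m div 2. fact m / (fact k * fact (m - 2 * k)) * (2 * cmod w) ^ (m - 2 * k))"
  unfolding hermite_def
proof (rule order_trans[OF norm_sum sum_mono])
  fix k
  define c :: nat where "c = fact m div (fact k * fact (m - 2 * k))"
  have "real c \<le> fact m / (fact k * fact (m - 2 * k))"
    unfolding c_def using of_nat_div_le_of_nat[of "fact m" "fact k * fact (m - 2 * k)"] by simp
  then have "real c * (2 * cmod w) ^ (m - 2 * k)
             \<le> fact m / (fact k * fact (m - 2 * k)) * (2 * cmod w) ^ (m - 2 * k)"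
    by (rule mult_right_mono) simp
  then show "cmod ((-1) ^ k * of_nat c * (2 * w) ^ (m - 2 * k))
             \<le> fact m / (fact k * fact (m - 2 * k)) * (2 * cmod w) ^ (m - 2 * k)"
    by (simp add: norm_mult norm_power)
qed

lemma hermite_even_coeff_le:
  assumes "k \<le> n"
  shows "fact (2 * n) / (fact k * fact (2 * n - 2 * k)) * fact (n - k)
         \<le> fact (2 * n) / fact n * sqrt (4 * real n + 1) * real (n choose k) / 4 ^ (n - k)"
proof -
  define j where "j = n - k"
  define b where "b = real ((2 * j) choose j)"
  have b_pos: "0 < b"
    unfolding b_def by simp
  have fact_2j: "fact (2 * j) = b * (fact j)\<^sup>2"
    unfolding b_def by (subst binomial_fact) (auto simp: power2_eq_square mult_2)
  have "(4::real) ^ j \<le> sqrt (4 * real j + 1) * b"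
    unfolding b_def by (rule central_binomial_lower_bound_sqrt)
  also have "\<dots> \<le> sqrt (4 * real n + 1) * b"
    using b_pos by (intro mult_right_mono) (auto simp: j_def)
  finally have inv_b: "1 / b \<le> sqrt (4 * real n + 1) / 4 ^ j"
    using b_pos by (simp add: field_simps)
  have "fact (2 * n) / (fact k * fact (2 * n - 2 * k)) * fact (n - k)
        = fact (2 * n) / fact n * real (n choose k) * (1 / b)"
    using assms b_pos unfolding diff_mult_distrib2[symmetric] j_def[symmetric] fact_2j
    by (simp add: binomial_fact j_def field_simps power2_eq_square)
  also have "\<dots> \<le> fact (2 * n) / fact n * real (n choose k) * (sqrt (4 * real n + 1) / 4 ^ j)"
    using inv_b by (intro mult_left_mono) auto
  also have "\<dots> = fact (2 * n) / fact n * sqrt (4 * real n + 1) * real (n choose k) / 4 ^ (n - k)"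
    by (simp add: j_def)
  finally show ?thesis .
qed

lemma norm_hermite_even_le:
  assumes "0 < \<mu>"
  shows "cmod (hermite (2 * n) w)
         \<le> fact (2 * n) / fact n * sqrt (4 * real n + 1) * (1 + \<mu> / 4) ^ n * exp (4 * (cmod w)\<^sup>2 / \<mu>)"
proof -
  define A where "A = fact (2 * n) / fact n * sqrt (4 * real n + 1)"
  define E where "E = exp (4 * (cmod w)\<^sup>2 / \<mu>)"
  have "cmod (hermite (2 * n) w)
        \<le> (\<Sum>k\<le>n. fact (2 * n) / (fact k * fact (2 * n - 2 * k)) * (2 * cmod w) ^ (2 * n - 2 * k))"
    using norm_hermite_le[of "2 * n" w] by simp
  also have "\<dots> \<le> (\<Sum>k\<le>n. A * E * (real (n choose k) * 1 ^ k * (\<mu> / 4) ^ (n - k)))"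
  proof (rule sum_mono)
    fix k assume "k \<in> {..n}"
    then have k: "k \<le> n" by simp
    have "(2 * cmod w) ^ (2 * n - 2 * k) = (4 * (cmod w)\<^sup>2) ^ (n - k)"
      by (simp add: power_mult power_mult_distrib flip: diff_mult_distrib2)
    also have "\<dots> \<le> fact (n - k) * \<mu> ^ (n - k) * E"
      unfolding E_def using assms by (intro power_le_fact_mult_exp) auto
    finally have "fact (2 * n) / (fact k * fact (2 * n - 2 * k)) * (2 * cmod w) ^ (2 * n - 2 * k)
                  \<le> fact (2 * n) / (fact k * fact (2 * n - 2 * k)) * (fact (n - k) * \<mu> ^ (n - k) * E)"
      by (rule mult_left_mono) simp
    also have "\<dots> = fact (2 * n) / (fact k * fact (2 * n - 2 * k)) * fact (n - k) * (\<mu> ^ (n - k) * E)"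
      by (simp only: mult.assoc)
    also have "\<dots> \<le> A * real (n choose k) / 4 ^ (n - k) * (\<mu> ^ (n - k) * E)"
      unfolding A_def using assms hermite_even_coeff_le[OF k] by (intro mult_right_mono) (auto simp: E_def)
    also have "\<dots> = A * E * (real (n choose k) * 1 ^ k * (\<mu> / 4) ^ (n - k))"
      by (simp add: power_divide)
    finally show "fact (2 * n) / (fact k * fact (2 * n - 2 * k)) * (2 * cmod w) ^ (2 * n - 2 * k)
                  \<le> A * E * (real (n choose k) * 1 ^ k * (\<mu> / 4) ^ (n - k))" .
  qed
  also have "\<dots> = A * E * (1 + \<mu> / 4) ^ n"
    by (simp only: binomial_ring[of 1 "\<mu> / 4"] sum_distrib_left)
  finally show ?thesis
    by (simp only: A_def E_def mult_ac)
qed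

lemma hermite_on_even_constant_sq:
  "(pi powr (-1/4) * 2 powr (- real (2 * n) / 2) / sqrt (fact (2 * n)))\<^sup>2
   = 1 / (sqrt pi * 4 ^ n * fact (2 * n))"
proof -
  have "(pi powr (-1/4))\<^sup>2 = 1 / sqrt pi"
    by (simp add: power2_eq_square flip: powr_add) (simp add: powr_minus_divide powr_half_sqrt)
  moreover have "(2 powr (- real (2 * n) / 2))\<^sup>2 = 1 / (4 :: real) ^ n"
    by (simp add: powr_minus_divide powr_realpow power_divide flip: power_mult power_mult_numeral)
      (simp add: mult.commute[of n] power_mult)
  ultimately show ?thesis
    by (simp add: power_mult_distrib power_divide)
qed

lemma norm_hermite_on_even_sq_le:
  assumes "0 < \<mu>"
  shows "(cmod (hermite_on (2 * n) w))\<^sup>2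
         \<le> real ((2 * n) choose n) * (4 * real n + 1) * ((1 + \<mu> / 4)\<^sup>2 / 4) ^ n / sqrt pi
            * exp (8 * (cmod w)\<^sup>2 / \<mu>)"
proof -
  define C where "C = pi powr (-1/4) * 2 powr (- real (2 * n) / 2) / sqrt (fact (2 * n))"
  define q where "q = (1 + \<mu> / 4)\<^sup>2"
  have scale: "C\<^sup>2 * (fact (2 * n) / fact n)\<^sup>2 = real ((2 * n) choose n) / (sqrt pi * 4 ^ n)"
    unfolding C_def hermite_on_even_constant_sq
    by (subst binomial_fact) (auto simp: power2_eq_square mult_2)
  have q: "((1 + \<mu> / 4) ^ n)\<^sup>2 = q ^ n"
    unfolding q_def by (simp flip: power_mult add: mult.commute)
  have exp_sq: "(exp (4 * (cmod w)\<^sup>2 / \<mu>))\<^sup>2 = exp (8 * (cmod w)\<^sup>2 / \<mu>)"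
    by (simp flip: exp_of_nat_mult)
  have "cmod (hermite_on (2 * n) w) = C * cmod (hermite (2 * n) w)"
    by (simp add: hermite_on_def norm_mult norm_divide C_def)
  also have "\<dots> \<le> C * (fact (2 * n) / fact n * sqrt (4 * real n + 1) * (1 + \<mu> / 4) ^ n
                     * exp (4 * (cmod w)\<^sup>2 / \<mu>))"
    using norm_hermite_even_le[OF assms] by (rule mult_left_mono) (simp add: C_def)
  finally have "(cmod (hermite_on (2 * n) w))\<^sup>2
                \<le> (C * (fact (2 * n) / fact n * sqrt (4 * real n + 1) * (1 + \<mu> / 4) ^ n
                     * exp (4 * (cmod w)\<^sup>2 / \<mu>)))\<^sup>2"
    by (rule power_mono) simp
  also have "\<dots> = C\<^sup>2 * (fact (2 * n) / fact n)\<^sup>2 * (4 * real n + 1) * q ^ n * exp (8 * (cmod w)\<^sup>2 / \<mu>)"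
    by (simp only: power_mult_distrib real_sqrt_pow2[of "4 * real n + 1"] of_nat_0_le_iff q exp_sq mult.assoc)
  also have "\<dots> = real ((2 * n) choose n) * (4 * real n + 1) * (q / 4) ^ n / sqrt pi
                  * exp (8 * (cmod w)\<^sup>2 / \<mu>)"
    unfolding scale by (simp add: power_divide)
  finally show ?thesis
    unfolding q_def .
qed

lemma N_integrand_cis:
  "N_integrand m (cis t) x = (cmod (hermite_on m (cis t * of_real x)))\<^sup>2 * exp (- cos (2 * t) * x\<^sup>2)"
proof -
  have "Re ((cis t * of_real x)\<^sup>2) = cos (2 * t) * x\<^sup>2"
    unfolding cos_double by (simp add: power2_eq_square algebra_simps)
  then have "(cmod (exp (- (cis t * of_real x)\<^sup>2 / 2)))\<^sup>2 = exp (- cos (2 * t) * x\<^sup>2)"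
    by (simp flip: exp_of_nat_mult)
  then show ?thesis
    by (simp add: N_integrand_def hermite_rot_def norm_mult power_mult_distrib)
qed

lemma has_bochner_integral_gaussian:
  fixes a :: real
  assumes "0 < a"
  shows "has_bochner_integral lborel (\<lambda>x. exp (- a * x\<^sup>2)) (sqrt (pi / a))"
proof -
  define \<sigma> where "\<sigma> = sqrt (1 / (2 * a))"
  have "0 < \<sigma>" "2 * pi * \<sigma>\<^sup>2 = pi / a" "- (x\<^sup>2 / (2 * \<sigma>\<^sup>2)) = - a * x\<^sup>2" for x
    using assms by (simp_all add: \<sigma>_def)
  then have "normal_density 0 \<sigma> x * sqrt (pi / a) = exp (- a * x\<^sup>2)" for x
    using assms by (simp add: normal_density_def)
  moreover have "has_bochner_integral lborel (normal_density 0 \<sigma>) 1"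
    using \<open>0 < \<sigma>\<close> by (simp add: has_bochner_integral_iff)
  ultimately show ?thesis
    using has_bochner_integral_mult_left[where c = "sqrt (pi / a)"] by fastforce
qed

lemma dominated_by_gaussian:
  fixes f :: "real \<Rightarrow> real"
  assumes "f \<in> borel_measurable lborel" "0 < a"
    and "\<And>x. 0 \<le> f x" "\<And>x. f x \<le> A * exp (- a * x\<^sup>2)"
  shows "integrable lborel f" "integral\<^sup>L lborel f \<le> A * sqrt (pi / a)"
proof -
  have g: "has_bochner_integral lborel (\<lambda>x. A * exp (- a * x\<^sup>2)) (A * sqrt (pi / a))"
    using has_bochner_integral_gaussian[OF assms(2)] by (rule has_bochner_integral_mult_right)
  then have int_g: "integrable lborel (\<lambda>x. A * exp (- a * x\<^sup>2))"
    by (rule integrable.intros)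
  show f: "integrable lborel f"
  proof (rule Bochner_Integration.integrable_bound[OF int_g assms(1) AE_I2])
    show "norm (f x) \<le> norm (A * exp (- a * x\<^sup>2))" for x
      using assms(3,4)[of x] by simp
  qed
  have "integral\<^sup>L lborel f \<le> (\<integral>x. A * exp (- a * x\<^sup>2) \<partial>lborel)"
    using f int_g assms(4) by (rule integral_mono)
  also have "\<dots> = A * sqrt (pi / a)"
    using g by (rule has_bochner_integral_integral_eq)
  finally show "integral\<^sup>L lborel f \<le> A * sqrt (pi / a)" .
qed

lemma hermite_gaussian_constant_le:
  fixes c :: real
  assumes "0 < c" "c \<le> 1"
  shows "real ((2 * n) choose n) * (4 * real n + 1) * ((1 + 10 / c / 4)\<^sup>2 / 4) ^ n / sqrt pi
           * sqrt (pi / (c / 5))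
         \<le> pi * sqrt (real n + 1) * 2 ^ (4 * n + 2) / sqrt c ^ (4 * n + 1)"
proof -
  have "1 + 10 / c / 4 \<le> 4 / c"
    using assms by (simp add: field_simps)
  then have "((1 + 10 / c / 4)\<^sup>2) ^ n \<le> ((4 / c)\<^sup>2) ^ n"
    using assms by (intro power_mono) auto
  then have pow: "4 ^ n * ((1 + 10 / c / 4)\<^sup>2 / 4) ^ n \<le> (4 / c) ^ (2 * n)"
    by (simp add: power_mult flip: power_mult_distrib)
  have "sqrt 5 \<le> sqrt (3\<^sup>2)"
    by (rule real_sqrt_le_mono) simp
  then have sqrt_factor: "sqrt (pi / (c / 5)) / sqrt pi \<le> pi / sqrt c"
    using pi_gt3 assms(1) by (simp add: real_sqrt_divide real_sqrt_mult divide_right_mono)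
  have "real ((2 * n) choose n) * (4 * real n + 1) * ((1 + 10 / c / 4)\<^sup>2 / 4) ^ n / sqrt pi
          * sqrt (pi / (c / 5))
        = (real ((2 * n) choose n) * (4 * real n + 1)) * ((1 + 10 / c / 4)\<^sup>2 / 4) ^ n
          * (sqrt (pi / (c / 5)) / sqrt pi)"
    by simp
  also have "\<dots> \<le> (4 * sqrt (real n + 1) * 4 ^ n) * ((1 + 10 / c / 4)\<^sup>2 / 4) ^ n * (pi / sqrt c)"
    using assms by (intro mult_mono[OF mult_right_mono[OF central_binomial_mult_le] sqrt_factor]) auto
  also have "\<dots> = 4 * sqrt (real n + 1) * (4 ^ n * ((1 + 10 / c / 4)\<^sup>2 / 4) ^ n) * (pi / sqrt c)"
    by (simp only: mult.assoc)
  also have "\<dots> \<le> 4 * sqrt (real n + 1) * (4 / c) ^ (2 * n) * (pi / sqrt c)"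
    using pow assms by (intro mult_right_mono mult_left_mono) auto
  also have "\<dots> = pi * sqrt (real n + 1) * 2 ^ (4 * n + 2) / sqrt c ^ (4 * n + 1)"
  proof -
    have "sqrt c ^ (4 * n + 1) = (sqrt c ^ 2) ^ (2 * n) * sqrt c"
      by (simp add: power_add flip: power_mult)
    also have "\<dots> = c ^ (2 * n) * sqrt c"
      using assms by simp
    finally have sqrt_pow: "sqrt c ^ (4 * n + 1) = c ^ (2 * n) * sqrt c" .
    have two_pow: "(2::real) ^ (4 * n + 2) = 4 * 4 ^ (2 * n)"
      by (simp add: power_add power_mult)
    show ?thesis
      unfolding sqrt_pow two_pow by (simp add: power_divide mult_ac)
  qed
  finally show ?thesis .
qed

theorem theorem5:
  fixes \<theta> :: real and n :: nat
  assumes "\<bar>\<theta>\<bar> < pi / 4"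
  defines "z \<equiv> cis \<theta>"
  defines "s \<equiv> sqrt (cos (2 * \<theta>))"
  shows "integrable lborel (N_integrand (2 * n) z)
         \<and> N_mz (2 * n) z \<le> pi * sqrt (real n + 1) * 2 ^ (4 * n + 2) / s ^ (4 * n + 1)"
proof -
  define c where "c = cos (2 * \<theta>)"
  have c: "0 < c" "c \<le> 1"
    unfolding c_def using assms(1) by (auto intro!: cos_gt_zero_pi)
  define K where "K = real ((2 * n) choose n) * (4 * real n + 1) * ((1 + 10 / c / 4)\<^sup>2 / 4) ^ n / sqrt pi"
  have dominated: "N_integrand (2 * n) z x \<le> K * exp (- (c / 5) * x\<^sup>2)" for x
  proof -
    have "N_integrand (2 * n) z x = (cmod (hermite_on (2 * n) (z * of_real x)))\<^sup>2 * exp (- c * x\<^sup>2)"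
      unfolding z_def c_def by (rule N_integrand_cis)
    also have "\<dots> \<le> K * exp (8 * x\<^sup>2 / (10 / c)) * exp (- c * x\<^sup>2)"
      using norm_hermite_on_even_sq_le[of "10 / c" n "z * of_real x"] c
      by (intro mult_right_mono) (simp_all add: K_def z_def norm_mult)
    also have "\<dots> = K * exp (- (c / 5) * x\<^sup>2)"
      by (simp add: mult.assoc flip: exp_add)
    finally show ?thesis .
  qed
  have "N_integrand (2 * n) z \<in> borel_measurable lborel"
    unfolding N_integrand_def hermite_rot_def hermite_on_def hermite_def by measurable
  moreover have "0 < c / 5" "0 \<le> N_integrand (2 * n) z x" for x
    using c by (simp_all add: N_integrand_def)
  ultimately have "integrable lborel (N_integrand (2 * n) z)" "N_mz (2 * n) z \<le> K * sqrt (pi / (c / 5))"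
    unfolding N_mz_def using dominated_by_gaussian dominated by blast+
  moreover have "K * sqrt (pi / (c / 5)) \<le> pi * sqrt (real n + 1) * 2 ^ (4 * n + 2) / s ^ (4 * n + 1)"
    unfolding K_def s_def c_def[symmetric] by (rule hermite_gaussian_constant_le[OF c])
  ultimately show ?thesis
    by simp
qed

end
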